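(* For positive integers $p,m$ and real $\alpha>0$, $$\Big((-1)^{m-1}-(-1)^{p-1}\Big)\sum_{n=1}^\infty\frac{H_{n+2\alpha}}{(n+\alpha)^{p+m}}=\Big((-1)^{m-1}-(-1)^{p-1}\Big)H_\alpha\,\zeta(p+m,\alpha+1)+\sum_{i=1}^{p-1}(-1)^{i-1}\zeta(p+1-i,\alpha+1)\,\zeta(m+i,\alpha+1)-\sum_{i=1}^{m-1}(-1)^{i-1}\zeta(m+1-i,\alpha+1)\,\zeta(p+i,\alpha+1).$$ In particular $\sum_{n\ge1}\frac{H_{n+2\alpha}}{(n+\alpha)^3}=H_\alpha\zeta(3,\alpha+1)+\frac12\zeta(2,\alpha+1)^2$.
   Context: $H_\alpha := \sum_{k=1}^\infty\left(\frac1k-\frac1{k+\alpha}\right)$ for real $\alpha$ not a negative integer. $\zeta(s,\alpha+1)=\sum_{n=1}^\infty (n+\alpha)^{-s}$ is the Hurwitz zeta function. Empty sums are $0$. *)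

theory Defs
  imports Complex_Main
begin

definition genH :: "real \<Rightarrow> real" where
  "genH \<alpha> = (\<Sum>k. 1 / real (Suc k) - 1 / (real (Suc k) + \<alpha>))"

text \<open>Hurwitz zeta zeta(s, alpha+1) = sum_{n>=1} (n+alpha)^(-s), for natural exponent s.\<close>
definition hzeta :: "nat \<Rightarrow> real \<Rightarrow> real" where
  "hzeta s \<alpha> = (\<Sum>n. 1 / (real (Suc n) + \<alpha>) ^ s)"

end

theory Submission imports Defs "HOL-Analysis.Analysis" begin

text \<open>
  Write \<open>x\<^sub>n = n + \<alpha>\<close> for \<open>n \<ge> 1\<close> and \<open>T(a,b) = \<Sum>\<^sub>n\<^sub>,\<^sub>k 1/(x\<^sub>k\<^sup>a x\<^sub>n\<^sup>b (x\<^sub>k + x\<^sub>n))\<close>. Since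
  \<open>H\<^bsub>n+2\<alpha>\<^esub> - H\<^sub>\<alpha> = \<Sum>\<^sub>k x\<^sub>n/(x\<^sub>k(x\<^sub>k + x\<^sub>n))\<close>, the series on the left equals
  \<open>H\<^sub>\<alpha> \<zeta>(p+m, \<alpha>+1) + T(1, p+m-1)\<close>. The partial fraction
  \<open>1/(A\<^sup>aB\<^sup>b) = (1/(A\<^bsup>a-1\<^esup>B\<^sup>b) + 1/(A\<^sup>aB\<^bsup>b-1\<^esup>))/(A+B)\<close> gives
  \<open>\<zeta>(a)\<zeta>(b) = T(a-1,b) + T(a,b-1)\<close>, so both alternating sums on the right telescope,
  to \<open>T(p,m) + (-1)\<^sup>p T(1,p+m-1)\<close> and \<open>T(m,p) + (-1)\<^sup>m T(1,p+m-1)\<close>; as \<open>T\<close> is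
  symmetric, their difference is \<open>((-1)\<^sup>p - (-1)\<^sup>m) T(1,p+m-1)\<close>.
\<close>

definition shifted :: "real \<Rightarrow> nat \<Rightarrow> real" where
  "shifted \<alpha> k = real (Suc k) + \<alpha>"

lemma shifted_ge_1: "\<alpha> \<ge> 0 \<Longrightarrow> shifted \<alpha> k \<ge> 1"
  by (simp add: shifted_def)

lemma shifted_pos: "\<alpha> \<ge> 0 \<Longrightarrow> shifted \<alpha> k > 0"
  by (simp add: shifted_def)

lemma hzeta_has_sum:
  assumes "\<alpha> \<ge> 0" "s \<ge> 2"
  shows "((\<lambda>n. 1 / shifted \<alpha> n ^ s) has_sum hzeta s \<alpha>) UNIV"
proof -
  have "summable (\<lambda>n. inverse (real (Suc n) ^ s))"
    using inverse_power_summable[of s] assms by (subst summable_Suc_iff) simp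
  then have "summable (\<lambda>n. 1 / shifted \<alpha> n ^ s)"
  proof (rule summable_comparison_test')
    fix n :: nat
    have "real (Suc n) ^ s \<le> shifted \<alpha> n ^ s"
      using assms by (intro power_mono) (auto simp: shifted_def)
    moreover have "shifted \<alpha> n ^ s > 0"
      using shifted_pos[OF assms(1)] by simp
    ultimately show "norm (1 / shifted \<alpha> n ^ s) \<le> inverse (real (Suc n) ^ s)"
      by (simp add: divide_simps)
  qed
  then have "(\<lambda>n. 1 / shifted \<alpha> n ^ s) sums hzeta s \<alpha>"
    by (simp add: hzeta_def shifted_def summable_sums)
  then show ?thesis
    by (rule sums_nonneg_imp_has_sum) (simp add: shifted_pos[OF assms(1)] less_imp_le)
qed

lemma genH_sums:
  assumes "\<beta> \<ge> 0"
  shows "(\<lambda>k. 1 / real (Suc k) - 1 / (real (Suc k) + \<beta>)) sums genH \<beta>"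
proof -
  have "summable (\<lambda>n. \<beta> * inverse (real (Suc n) ^ 2))"
    using inverse_power_summable[of 2] by (intro summable_mult) (subst summable_Suc_iff, simp)
  then have "summable (\<lambda>k. 1 / real (Suc k) - 1 / (real (Suc k) + \<beta>))"
  proof (rule summable_comparison_test')
    fix n :: nat
    define N where "N = real (Suc n)"
    have N: "N \<ge> 1" by (simp add: N_def)
    have "1 / N - 1 / (N + \<beta>) = \<beta> / (N * (N + \<beta>))"
      using N assms by (simp add: field_simps)
    also have "\<dots> \<le> \<beta> / (N * N)"
      using N assms by (intro divide_left_mono mult_left_mono) auto
    also have "\<dots> = \<beta> * inverse (real (Suc n) ^ 2)"
      by (simp add: N_def power2_eq_square divide_inverse)
    finally have "1 / N - 1 / (N + \<beta>) \<le> \<beta> * inverse (real (Suc n) ^ 2)" .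
    moreover have "1 / (N + \<beta>) \<le> 1 / N"
      using N assms by (intro divide_left_mono) auto
    ultimately show "norm (1 / real (Suc n) - 1 / (real (Suc n) + \<beta>)) \<le> \<beta> * inverse (real (Suc n) ^ 2)"
      by (simp add: N_def)
  qed
  then show ?thesis
    by (simp add: genH_def summable_sums)
qed

lemma genH_diff_sums:
  assumes "\<beta> \<ge> 0" "\<gamma> \<ge> 0"
  shows "(\<lambda>k. 1 / (real (Suc k) + \<gamma>) - 1 / (real (Suc k) + \<beta>)) sums (genH \<beta> - genH \<gamma>)"
  using sums_diff[OF genH_sums[OF assms(1)] genH_sums[OF assms(2)]] by simp

lemma has_sum_product_nonneg:
  fixes u v :: "'a \<Rightarrow> real"
  assumes "(u has_sum U) A" "(v has_sum V) B" "\<And>n. n \<in> A \<Longrightarrow> u n \<ge> 0" "\<And>k. k \<in> B \<Longrightarrow> v k \<ge> 0"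
  shows "((\<lambda>(n, k). u n * v k) has_sum U * V) (A \<times> B)"
proof -
  have rows: "((\<lambda>k. u n * v k) has_sum u n * V) B" for n
    using has_sum_cmult_right[OF assms(2)] by simp
  have total: "((\<lambda>n. u n * V) has_sum U * V) A"
    using has_sum_cmult_left[OF assms(1)] by simp
  have "(\<lambda>(n, k). u n * v k) summable_on Sigma A (\<lambda>_. B)"
    using rows total assms by (intro summable_on_SigmaI) (auto simp: summable_on_def)
  from has_sum_SigmaI[OF _ total this] rows show ?thesis
    by simp
qed

lemma inverse_powers_partial_fraction:
  fixes A B :: real
  assumes "A > 0" "B > 0" "a \<ge> 1" "b \<ge> 1"
  shows "1 / (A ^ a * B ^ b) = 1 / (A ^ (a - 1) * B ^ b * (A + B)) + 1 / (A ^ a * B ^ (b - 1) * (A + B))"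
proof -
  have A: "A ^ a = A * A ^ (a - 1)" and B: "B ^ b = B * B ^ (b - 1)"
    using assms by (simp_all flip: power_Suc)
  have "1 / (A ^ (a - 1) * B ^ b * (A + B)) + 1 / (A ^ a * B ^ (b - 1) * (A + B))
      = A / (A ^ a * B ^ b * (A + B)) + B / (A ^ a * B ^ b * (A + B))"
    using assms by (simp add: A B)
  also have "\<dots> = 1 / (A ^ a * B ^ b)"
    using assms by (simp flip: add_divide_distrib)
  finally show ?thesis ..
qed

text \<open>Tornheim's double series \<open>T(a,b,1)\<close>, with \<open>n + \<alpha>\<close> in place of \<open>n\<close>; the exponent \<open>a\<close> sits on
  the second index.\<close>

definition tornheim_term :: "nat \<Rightarrow> nat \<Rightarrow> real \<Rightarrow> nat \<times> nat \<Rightarrow> real" where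
  "tornheim_term a b \<alpha> =
     (\<lambda>(n, k). 1 / (shifted \<alpha> k ^ a * shifted \<alpha> n ^ b * (shifted \<alpha> k + shifted \<alpha> n)))"

definition tornheim :: "nat \<Rightarrow> nat \<Rightarrow> real \<Rightarrow> real" where
  "tornheim a b \<alpha> = (\<Sum>\<^sub>\<infinity>x. tornheim_term a b \<alpha> x)"

lemma tornheim_term_nonneg: "\<alpha> \<ge> 0 \<Longrightarrow> tornheim_term a b \<alpha> x \<ge> 0"
  using shifted_pos[of \<alpha>] by (cases x) (simp add: tornheim_term_def add_pos_pos less_imp_le)

lemma tornheim_summable:
  assumes "\<alpha> \<ge> 0" "a \<ge> 1" "b \<ge> 1" "a + b \<ge> 3"
  shows "tornheim_term a b \<alpha> summable_on UNIV"
proof -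
  have "((\<lambda>(n, k). 1 / shifted \<alpha> n ^ 2 * (1 / shifted \<alpha> k ^ 2)) has_sum hzeta 2 \<alpha> * hzeta 2 \<alpha>)
          (UNIV \<times> UNIV)"
    using assms shifted_pos[OF assms(1)]
    by (intro has_sum_product_nonneg hzeta_has_sum) (auto intro: less_imp_le)
  then have "(\<lambda>(n, k). 1 / shifted \<alpha> n ^ 2 * (1 / shifted \<alpha> k ^ 2)) summable_on UNIV"
    by (auto simp: summable_on_def)
  then show ?thesis
  proof (rule summable_on_comparison_test)
    fix x :: "nat \<times> nat"
    obtain n k where x: "x = (n, k)" by (cases x)
    define A B where "A = shifted \<alpha> k" and "B = shifted \<alpha> n"
    have A: "A \<ge> 1" and B: "B \<ge> 1"
      using shifted_ge_1[OF assms(1)] by (auto simp: A_def B_def)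
    have "A\<^sup>2 * B\<^sup>2 \<le> A ^ a * B ^ b * (A + B)"
    proof (cases "a \<ge> 2")
      case True
      have "A\<^sup>2 \<le> A ^ a" "B \<le> A + B"
        using A B True by (auto intro: power_increasing)
      moreover have "B \<le> B ^ b"
        using power_increasing[of 1 b B] B assms by simp
      ultimately have "A\<^sup>2 * (B * B) \<le> A ^ a * (B ^ b * (A + B))"
        using A B by (intro mult_mono) auto
      then show ?thesis by (simp add: power2_eq_square algebra_simps)
    next
      case False
      then have "B\<^sup>2 \<le> B ^ b" "A \<le> A + B"
        using A B assms by (auto intro: power_increasing)
      moreover have "A \<le> A ^ a"
        using power_increasing[of 1 a A] A assms by simp
      ultimately have "B\<^sup>2 * (A * A) \<le> B ^ b * (A ^ a * (A + B))"
        using A B by (intro mult_mono) auto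
      then show ?thesis by (simp add: power2_eq_square algebra_simps)
    qed
    then have "1 / (A ^ a * B ^ b * (A + B)) \<le> 1 / (A\<^sup>2 * B\<^sup>2)"
      using A B by (intro divide_left_mono) auto
    then show "tornheim_term a b \<alpha> x \<le> (\<lambda>(n, k). 1 / shifted \<alpha> n ^ 2 * (1 / shifted \<alpha> k ^ 2)) x"
      by (simp add: x tornheim_term_def A_def[symmetric] B_def[symmetric] mult.commute)
  qed (rule tornheim_term_nonneg[OF assms(1)])
qed

lemma tornheim_has_sum:
  assumes "\<alpha> \<ge> 0" "a \<ge> 1" "b \<ge> 1" "a + b \<ge> 3"
  shows "(tornheim_term a b \<alpha> has_sum tornheim a b \<alpha>) UNIV"
  unfolding tornheim_def using tornheim_summable[OF assms] by (rule has_sum_infsum)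

lemma tornheim_commute: "tornheim a b \<alpha> = tornheim b a \<alpha>"
proof -
  have "tornheim a b \<alpha> = infsum (tornheim_term a b \<alpha> \<circ> prod.swap) UNIV"
    unfolding tornheim_def by (metis infsum_reindex inj_swap surj_swap)
  also have "tornheim_term a b \<alpha> \<circ> prod.swap = tornheim_term b a \<alpha>"
    by (auto simp: tornheim_term_def fun_eq_iff algebra_simps)
  finally show ?thesis
    by (simp add: tornheim_def)
qed

lemma hzeta_mult_eq_tornheim:
  assumes "\<alpha> \<ge> 0" "a \<ge> 2" "b \<ge> 2"
  shows "hzeta a \<alpha> * hzeta b \<alpha> = tornheim (a - 1) b \<alpha> + tornheim a (b - 1) \<alpha>"
proof -
  have "((\<lambda>(n, k). 1 / shifted \<alpha> n ^ b * (1 / shifted \<alpha> k ^ a)) has_sum hzeta b \<alpha> * hzeta a \<alpha>)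
          (UNIV \<times> UNIV)"
    using assms shifted_pos[OF assms(1)]
    by (intro has_sum_product_nonneg hzeta_has_sum) (auto intro: less_imp_le)
  also have "(\<lambda>(n, k). 1 / shifted \<alpha> n ^ b * (1 / shifted \<alpha> k ^ a))
           = (\<lambda>x. tornheim_term (a - 1) b \<alpha> x + tornheim_term a (b - 1) \<alpha> x)"
  proof (intro ext, clarify)
    fix n k
    show "1 / shifted \<alpha> n ^ b * (1 / shifted \<alpha> k ^ a)
        = tornheim_term (a - 1) b \<alpha> (n, k) + tornheim_term a (b - 1) \<alpha> (n, k)"
      using inverse_powers_partial_fraction[of "shifted \<alpha> k" "shifted \<alpha> n" a b]
        assms shifted_pos[OF assms(1)]
      by (simp add: tornheim_term_def mult.commute)
  qed
  finally have "((\<lambda>x. tornheim_term (a - 1) b \<alpha> x + tornheim_term a (b - 1) \<alpha> x)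
                   has_sum hzeta a \<alpha> * hzeta b \<alpha>) UNIV"
    by (simp add: mult.commute)
  moreover have "((\<lambda>x. tornheim_term (a - 1) b \<alpha> x + tornheim_term a (b - 1) \<alpha> x)
                   has_sum tornheim (a - 1) b \<alpha> + tornheim a (b - 1) \<alpha>) UNIV"
    using assms by (intro has_sum_add tornheim_has_sum) auto
  ultimately show ?thesis
    using has_sum_unique by blast
qed

lemma genH_shift_diff_eq_tornheim_term:
  assumes "\<alpha> \<ge> 0" "s \<ge> 1"
  shows "(1 / (real (Suc k) + \<alpha>) - 1 / (real (Suc k) + (real (Suc n) + 2 * \<alpha>))) / shifted \<alpha> n ^ s
       = tornheim_term 1 (s - 1) \<alpha> (n, k)"
proof -
  define A B where "A = shifted \<alpha> k" and "B = shifted \<alpha> n"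
  have "A > 0" "B > 0"
    using shifted_pos[OF assms(1)] by (auto simp: A_def B_def)
  have "real (Suc k) + \<alpha> = A" "real (Suc k) + (real (Suc n) + 2 * \<alpha>) = A + B"
    by (auto simp: A_def B_def shifted_def)
  then have "(1 / (real (Suc k) + \<alpha>) - 1 / (real (Suc k) + (real (Suc n) + 2 * \<alpha>))) / B ^ s
           = B / (A * (A + B)) / (B * B ^ (s - 1))"
    using \<open>A > 0\<close> \<open>B > 0\<close> assms by (simp add: field_simps flip: power_Suc)
  also have "\<dots> = 1 / (A ^ 1 * B ^ (s - 1) * (A + B))"
    using \<open>B > 0\<close> by (simp add: divide_divide_eq_left mult.commute mult.left_commute)
  finally show ?thesis
    by (simp add: tornheim_term_def A_def[symmetric] B_def[symmetric])
qed

lemma genH_shifted_series: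
  assumes "\<alpha> \<ge> 0" "s \<ge> 3"
  shows "(\<lambda>n. genH (real (Suc n) + 2 * \<alpha>) / (real (Suc n) + \<alpha>) ^ s)
           sums (genH \<alpha> * hzeta s \<alpha> + tornheim 1 (s - 1) \<alpha>)"
proof -
  define D where "D n = (genH (real (Suc n) + 2 * \<alpha>) - genH \<alpha>) / shifted \<alpha> n ^ s" for n
  have rows: "((\<lambda>k. tornheim_term 1 (s - 1) \<alpha> (n, k)) has_sum D n) UNIV" for n
  proof -
    have "(\<lambda>k. (1 / (real (Suc k) + \<alpha>) - 1 / (real (Suc k) + (real (Suc n) + 2 * \<alpha>)))
                / shifted \<alpha> n ^ s) sums D n"
      unfolding D_def using assms by (intro sums_divide genH_diff_sums) auto
    also have "(\<lambda>k. (1 / (real (Suc k) + \<alpha>) - 1 / (real (Suc k) + (real (Suc n) + 2 * \<alpha>)))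
                / shifted \<alpha> n ^ s) = (\<lambda>k. tornheim_term 1 (s - 1) \<alpha> (n, k))"
      using assms by (intro ext genH_shift_diff_eq_tornheim_term) auto
    finally have "(\<lambda>k. tornheim_term 1 (s - 1) \<alpha> (n, k)) sums D n" .
    then show ?thesis
      by (rule sums_nonneg_imp_has_sum) (rule tornheim_term_nonneg[OF assms(1)])
  qed
  have "(tornheim_term 1 (s - 1) \<alpha> has_sum tornheim 1 (s - 1) \<alpha>) (UNIV \<times> UNIV)"
    using assms by (simp add: tornheim_has_sum)
  then have "(D has_sum tornheim 1 (s - 1) \<alpha>) UNIV"
    using rows by (rule has_sum_SigmaD)
  moreover have "((\<lambda>n. genH \<alpha> * (1 / shifted \<alpha> n ^ s)) has_sum genH \<alpha> * hzeta s \<alpha>) UNIV"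
    using assms by (intro has_sum_cmult_right hzeta_has_sum) auto
  ultimately have "((\<lambda>n. genH \<alpha> * (1 / shifted \<alpha> n ^ s) + D n)
                     has_sum genH \<alpha> * hzeta s \<alpha> + tornheim 1 (s - 1) \<alpha>) UNIV"
    by (intro has_sum_add)
  moreover have "(\<lambda>n. genH \<alpha> * (1 / shifted \<alpha> n ^ s) + D n)
               = (\<lambda>n. genH (real (Suc n) + 2 * \<alpha>) / (real (Suc n) + \<alpha>) ^ s)"
    by (auto simp: D_def shifted_def fun_eq_iff diff_divide_distrib)
  ultimately show ?thesis
    by (metis has_sum_imp_sums)
qed

lemma sum_alternating_telescope:
  fixes g :: "nat \<Rightarrow> 'a :: comm_ring_1"
  shows "(\<Sum>i = 1..q. (-1) ^ (i - 1) * (g i + g (i - 1))) = g 0 + (-1) ^ (q + 1) * g q"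
  by (induction q) (simp_all add: algebra_simps)

lemma alternating_hzeta_sum_eq_tornheim:
  assumes "\<alpha> \<ge> 0" "p \<ge> 1" "m \<ge> 1"
  shows "(\<Sum>i = 1..p - 1. (-1::real) ^ (i - 1) * hzeta (p + 1 - i) \<alpha> * hzeta (m + i) \<alpha>)
       = tornheim p m \<alpha> + (-1) ^ p * tornheim 1 (p + m - 1) \<alpha>"
proof -
  define g where "g j = tornheim (p - j) (m + j) \<alpha>" for j
  have "(\<Sum>i = 1..p - 1. (-1::real) ^ (i - 1) * hzeta (p + 1 - i) \<alpha> * hzeta (m + i) \<alpha>)
      = (\<Sum>i = 1..p - 1. (-1) ^ (i - 1) * (g i + g (i - 1)))"
  proof (rule sum.cong)
    fix i assume i: "i \<in> {1..p - 1}"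
    then have "hzeta (p + 1 - i) \<alpha> * hzeta (m + i) \<alpha>
             = tornheim (p + 1 - i - 1) (m + i) \<alpha> + tornheim (p + 1 - i) (m + i - 1) \<alpha>"
      using assms by (intro hzeta_mult_eq_tornheim) auto
    also have "\<dots> = g i + g (i - 1)"
      using i by (simp add: g_def Suc_diff_le)
    finally show "(-1::real) ^ (i - 1) * hzeta (p + 1 - i) \<alpha> * hzeta (m + i) \<alpha>
                = (-1) ^ (i - 1) * (g i + g (i - 1))"
      by simp
  qed simp
  also have "\<dots> = g 0 + (-1) ^ (p - 1 + 1) * g (p - 1)"
    by (rule sum_alternating_telescope)
  also have "\<dots> = tornheim p m \<alpha> + (-1) ^ p * tornheim 1 (p + m - 1) \<alpha>"
    using assms by (simp add: g_def add.commute)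
  finally show ?thesis .
qed

lemma genH_hzeta_identity:
  assumes "\<alpha> \<ge> 0" "p \<ge> 1" "m \<ge> 1"
  shows "((-1::real) ^ (m - 1) - (-1) ^ (p - 1)) *
           (\<Sum>n. genH (real (Suc n) + 2 * \<alpha>) / (real (Suc n) + \<alpha>) ^ (p + m))
         = ((-1::real) ^ (m - 1) - (-1) ^ (p - 1)) * genH \<alpha> * hzeta (p + m) \<alpha>
           + (\<Sum>i = 1..p - 1. (-1::real) ^ (i - 1) * hzeta (p + 1 - i) \<alpha> * hzeta (m + i) \<alpha>)
           - (\<Sum>i = 1..m - 1. (-1::real) ^ (i - 1) * hzeta (m + 1 - i) \<alpha> * hzeta (p + i) \<alpha>)"
proof (cases "p = 1 \<and> m = 1")
  case False
  then have "p + m \<ge> 3"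
    using assms by auto
  then have series: "(\<Sum>n. genH (real (Suc n) + 2 * \<alpha>) / (real (Suc n) + \<alpha>) ^ (p + m))
                   = genH \<alpha> * hzeta (p + m) \<alpha> + tornheim 1 (p + m - 1) \<alpha>"
    using genH_shifted_series[OF assms(1)] by (simp add: sums_iff)
  have sign: "(-1::real) ^ (m - 1) - (-1) ^ (p - 1) = (-1) ^ p - (-1) ^ m"
    using assms by (cases p; cases m) auto
  show ?thesis
    unfolding series sign alternating_hzeta_sum_eq_tornheim[OF assms]
      alternating_hzeta_sum_eq_tornheim[OF assms(1,3,2)] tornheim_commute[of m p]
    by (simp add: algebra_simps)
qed simp

theorem mainTheorem19:
  fixes p m :: nat and \<alpha> :: real
  assumes "p \<ge> 1" and "m \<ge> 1" and "\<alpha> > 0"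
  shows "((-1::real) ^ (m - 1) - (-1) ^ (p - 1)) *
           (\<Sum>n. genH (real (Suc n) + 2 * \<alpha>) / (real (Suc n) + \<alpha>) ^ (p + m))
         = ((-1::real) ^ (m - 1) - (-1) ^ (p - 1)) * genH \<alpha> * hzeta (p + m) \<alpha>
           + (\<Sum>i = 1..p - 1. (-1::real) ^ (i - 1) * hzeta (p + 1 - i) \<alpha> * hzeta (m + i) \<alpha>)
           - (\<Sum>i = 1..m - 1. (-1::real) ^ (i - 1) * hzeta (m + 1 - i) \<alpha> * hzeta (p + i) \<alpha>)
       \<and> (\<Sum>n. genH (real (Suc n) + 2 * \<alpha>) / (real (Suc n) + \<alpha>) ^ 3)
         = genH \<alpha> * hzeta 3 \<alpha> + 1 / 2 * (hzeta 2 \<alpha>) ^ 2"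
proof
  have \<alpha>: "\<alpha> \<ge> 0"
    using assms(3) by simp
  show "((-1::real) ^ (m - 1) - (-1) ^ (p - 1)) *
           (\<Sum>n. genH (real (Suc n) + 2 * \<alpha>) / (real (Suc n) + \<alpha>) ^ (p + m))
         = ((-1::real) ^ (m - 1) - (-1) ^ (p - 1)) * genH \<alpha> * hzeta (p + m) \<alpha>
           + (\<Sum>i = 1..p - 1. (-1::real) ^ (i - 1) * hzeta (p + 1 - i) \<alpha> * hzeta (m + i) \<alpha>)
           - (\<Sum>i = 1..m - 1. (-1::real) ^ (i - 1) * hzeta (m + 1 - i) \<alpha> * hzeta (p + i) \<alpha>)"
    using \<alpha> assms(1,2) by (rule genH_hzeta_identity)
  have "-2 * (\<Sum>n. genH (real (Suc n) + 2 * \<alpha>) / (real (Suc n) + \<alpha>) ^ 3)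
        = -2 * genH \<alpha> * hzeta 3 \<alpha> - hzeta 2 \<alpha> * hzeta 2 \<alpha>"
    using genH_hzeta_identity[OF \<alpha>, of 1 2] by (simp add: numeral_3_eq_3 numeral_2_eq_2)
  then show "(\<Sum>n. genH (real (Suc n) + 2 * \<alpha>) / (real (Suc n) + \<alpha>) ^ 3)
             = genH \<alpha> * hzeta 3 \<alpha> + 1 / 2 * (hzeta 2 \<alpha>) ^ 2"
    by (simp add: power2_eq_square)
qed

end
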